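(* Let $\mathcal{G}$ be an additive arithmetical semigroup (with the setup below), $S\subseteq\mathcal{P}$, and let $f\colon\mathbb{Z}_{\ge0}\to\mathbb{C}$ satisfy $f(0)=0$. Then for every $g\in\mathcal{G}$, $$\sum_{h\mid g}\mu(h)\,1_{\mathfrak{D}(\mathcal{G},S)}(h)\,f(d_-(h))=-Q_S(g)\,f(d^+(g)).$$
   Context: $\mathcal{G}$ is a commutative monoid (written additively, identity $e_{\mathcal{G}}$) freely generated by a countable set $\mathcal{P}$ of primes, with an additive degree map $\partial\colon\mathcal{G}\to\mathbb{Z}_{\ge0}$, $\partial(e_{\mathcal{G}})=0$, $\partial(P)>0$ for primes. $h\mid g$ means $g=h+r$ for some $r\in\mathcal{G}$. For $g\ne e_{\mathcal{G}}$: $d_-(g)=\min\{\partial(P):P\in\mathcal{P},P\mid g\}$, $d^+(g)=\max\{\partial(P):P\mid g\}$; conventions $d_-(e_{\mathcal{G}})=0$ and $d^+(e_{\mathcal{G}})=0$. $g$ is distinguishable if $g\ne e_{\mathcal{G}}$ and exactly one prime $P_{\min}(g)\mid g$ has degree $d_-(g)$; $\mathfrak{D}(\mathcal{G},S)=\{g\text{ distinguishable}:P_{\min}(g)\in S\}\cup\{e_{\mathcal{G}}\}$, with indicator function $1_{\mathfrak{D}(\mathcal{G},S)}$. $Q_S(g)=\#\{P\in S:P\mid g,\ \partial(P)=d^+(g)\}$. $\mu$ is the Möbius function ($\mu(e_{\mathcal{G}})=1$, $(-1)^k$ on sums of $k$ distinct primes, $0$ if $2P\mid g$ for some prime $P$).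 *)

theory Defs
  imports Complex_Main "HOL-Library.Multiset" "HOL-Library.Countable"
begin

text \<open>The free commutative monoid on the primes (elements of type 'p) is represented by
finite multisets of primes: addition is multiset sum, the identity is the empty multiset,
and divisibility h | g is sub-multiset inclusion.\<close>

definition gdeg :: "('p \<Rightarrow> nat) \<Rightarrow> 'p multiset \<Rightarrow> nat" where
  "gdeg deg g = sum_mset (image_mset deg g)"

definition d_minus :: "('p \<Rightarrow> nat) \<Rightarrow> 'p multiset \<Rightarrow> nat" where
  "d_minus deg g = (if g = {#} then 0 else Min (deg ` set_mset g))"

definition d_plus :: "('p \<Rightarrow> nat) \<Rightarrow> 'p multiset \<Rightarrow> nat" where
  "d_plus deg g = (if g = {#} then 0 else Max (deg ` set_mset g))"

definition distinguishable :: "('p \<Rightarrow> nat) \<Rightarrow> 'p multiset \<Rightarrow> bool" where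
  "distinguishable deg g \<longleftrightarrow>
     g \<noteq> {#} \<and> card {P. P \<in># g \<and> deg P = d_minus deg g} = 1"

definition P_min :: "('p \<Rightarrow> nat) \<Rightarrow> 'p multiset \<Rightarrow> 'p" where
  "P_min deg g = (THE P. P \<in># g \<and> deg P = d_minus deg g)"

definition in_D :: "('p \<Rightarrow> nat) \<Rightarrow> 'p set \<Rightarrow> 'p multiset \<Rightarrow> bool" where
  "in_D deg S g \<longleftrightarrow> g = {#} \<or> (distinguishable deg g \<and> P_min deg g \<in> S)"

definition ind_D :: "('p \<Rightarrow> nat) \<Rightarrow> 'p set \<Rightarrow> 'p multiset \<Rightarrow> complex" where
  "ind_D deg S g = (if in_D deg S g then 1 else 0)"

definition Q_S :: "('p \<Rightarrow> nat) \<Rightarrow> 'p set \<Rightarrow> 'p multiset \<Rightarrow> nat" where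
  "Q_S deg S g = card {P \<in> S. P \<in># g \<and> deg P = d_plus deg g}"

definition moebius :: "'p multiset \<Rightarrow> int" where
  "moebius g = (if \<forall>P. count g P \<le> 1 then (-1) ^ size g else 0)"

end

theory Submission
  imports Defs
begin

text \<open>Only squarefree divisors contribute, so the sum runs over the subsets T of the
primes dividing g; the divisor of T lies in the set D(G,S) exactly when T has a unique prime P
of minimal degree and P lies in S. Regrouping by P, the subsets with unique minimal element P
are P together with an arbitrary set of primes of g of degree larger than that of P, so their
alternating count is -1 if there is no such prime, i.e. if P has degree d^+(g), and 0
otherwise. The empty divisor contributes nothing since f(0) = 0.\<close>

lemma sum_Pow_neg_one_power:
  assumes "finite B"
  shows "(\<Sum>U\<in>Pow B. (-1::'a::comm_ring_1) ^ card U) = (if B = {} then 1 else 0)"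
proof -
  have "(\<Prod>x\<in>B. (-1::'a) + 1) = (\<Sum>U\<in>Pow B. (\<Prod>x\<in>U. -1) * (\<Prod>x\<in>B-U. 1))"
    by (rule prod_add[OF assms])
  then show ?thesis
    using assms by (simp add: power_0_left)
qed

lemma finite_subseteq_mset: "finite {h. h \<subseteq># g}"
proof -
  have "{h. h \<subseteq># g} \<subseteq> mset ` {xs. set xs \<subseteq> set_mset g \<and> length xs \<le> size g}"
  proof
    fix h assume "h \<in> {h. h \<subseteq># g}"
    moreover obtain xs where "mset xs = h"
      using ex_mset by blast
    ultimately show "h \<in> mset ` {xs. set xs \<subseteq> set_mset g \<and> length xs \<le> size g}"
      by (metis (mono_tags, lifting) image_eqI mem_Collect_eq set_mset_mono set_mset_mset
          size_mset size_mset_mono)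
  qed
  moreover have "finite {xs. set xs \<subseteq> set_mset g \<and> length xs \<le> size g}"
    by (rule finite_lists_length_le) simp
  ultimately show ?thesis
    using finite_subset by blast
qed

lemma moebius_mset_set: "finite T \<Longrightarrow> moebius (mset_set T) = (-1) ^ card T"
  by (simp add: moebius_def count_mset_set')

lemma moebius_eq_0_if_not_mset_set:
  assumes "h \<noteq> mset_set (set_mset h)"
  shows "moebius h = 0"
proof -
  have "\<not> (\<forall>P. count h P \<le> 1)"
  proof
    assume "\<forall>P. count h P \<le> 1"
    then have "count h P = count (mset_set (set_mset h)) P" for P
      by (metis count_eq_zero_iff count_mset_set(1,3) finite_set_mset le_antisym
          less_one not_le)
    with assms show False
      by (simp add: multiset_eqI)
  qed
  then show ?thesis
    by (simp add: moebius_def)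
qed

lemma sum_subseteq_mset_eq_sum_Pow:
  assumes "\<And>h. h \<subseteq># g \<Longrightarrow> h \<noteq> mset_set (set_mset h) \<Longrightarrow> F h = 0"
  shows "(\<Sum>h\<in>{h. h \<subseteq># g}. F h) = (\<Sum>T\<in>Pow (set_mset g). F (mset_set T))"
proof -
  have "(\<Sum>h\<in>{h. h \<subseteq># g}. F h) = (\<Sum>h\<in>mset_set ` Pow (set_mset g). F h)"
  proof (rule sum.mono_neutral_right[OF finite_subseteq_mset])
    show "mset_set ` Pow (set_mset g) \<subseteq> {h. h \<subseteq># g}"
      by (auto intro: subset_mset.order_trans[OF _ mset_set_set_mset_msubset]
          simp: subset_imp_msubset_mset_set)
    show "\<forall>h\<in>{h. h \<subseteq># g} - mset_set ` Pow (set_mset g). F h = 0"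
      using assms by (auto dest: set_mset_mono)
  qed
  also have "\<dots> = (\<Sum>T\<in>Pow (set_mset g). F (mset_set T))"
    by (rule sum.reindex_cong[where l = mset_set])
      (auto intro!: inj_onI simp: finite_subset)
  finally show ?thesis .
qed

definition unique_min :: "('p \<Rightarrow> nat) \<Rightarrow> 'p set \<Rightarrow> 'p \<Rightarrow> bool" where
  "unique_min deg T P \<longleftrightarrow> P \<in> T \<and> (\<forall>Q\<in>T. Q \<noteq> P \<longrightarrow> deg P < deg Q)"

lemma unique_min_unique: "unique_min deg T P \<Longrightarrow> unique_min deg T Q \<Longrightarrow> P = Q"
  unfolding unique_min_def by (metis less_asym)

lemma d_minus_mset_set:
  assumes "finite T" "unique_min deg T P"
  shows "d_minus deg (mset_set T) = deg P"
proof -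
  have "Min (deg ` T) = deg P"
    using assms by (intro Min_eqI) (auto simp: unique_min_def less_imp_le)
  with assms show ?thesis
    by (auto simp: d_minus_def unique_min_def mset_set_empty_iff)
qed

lemma min_degree_primes_mset_set:
  assumes "finite T" "unique_min deg T P"
  shows "{Q. Q \<in># mset_set T \<and> deg Q = d_minus deg (mset_set T)} = {P}"
  using assms by (auto simp: d_minus_mset_set unique_min_def)

lemma distinguishable_mset_set_iff:
  assumes "finite T"
  shows "distinguishable deg (mset_set T) \<longleftrightarrow> (\<exists>P. unique_min deg T P)"
proof
  assume dist: "distinguishable deg (mset_set T)"
  then have "card {Q. Q \<in># mset_set T \<and> deg Q = d_minus deg (mset_set T)} = 1"
    by (simp add: distinguishable_def)
  then obtain P where "{Q. Q \<in># mset_set T \<and> deg Q = d_minus deg (mset_set T)} = {P}"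
    by (rule card_1_singletonE)
  then have P: "{Q. Q \<in> T \<and> deg Q = d_minus deg (mset_set T)} = {P}"
    using assms by simp
  have "T \<noteq> {}"
    using dist by (auto simp: distinguishable_def)
  then have dmin: "d_minus deg (mset_set T) = Min (deg ` T)"
    using assms by (simp add: d_minus_def mset_set_empty_iff)
  have "P \<in> T" and degP: "deg P = Min (deg ` T)"
    using P[unfolded dmin] by blast+
  moreover have "deg P < deg Q" if "Q \<in> T" "Q \<noteq> P" for Q
  proof -
    have "deg P \<le> deg Q"
      using that assms unfolding degP by simp
    moreover have "deg Q \<noteq> deg P"
      using that P unfolding dmin degP by blast
    ultimately show ?thesis by simp
  qed
  ultimately have "unique_min deg T P"
    by (simp add: unique_min_def)
  then show "\<exists>P. unique_min deg T P" ..
next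
  assume "\<exists>P. unique_min deg T P"
  then obtain P where P: "unique_min deg T P" ..
  then have "T \<noteq> {}"
    by (auto simp: unique_min_def)
  with assms show "distinguishable deg (mset_set T)"
    using min_degree_primes_mset_set[OF assms P]
    by (simp add: distinguishable_def mset_set_empty_iff)
qed

lemma P_min_mset_set:
  assumes "finite T" "unique_min deg T P"
  shows "P_min deg (mset_set T) = P"
proof -
  have "Q \<in># mset_set T \<and> deg Q = d_minus deg (mset_set T) \<longleftrightarrow> Q = P" for Q
    using min_degree_primes_mset_set[OF assms] by blast
  then show ?thesis
    by (simp add: P_min_def)
qed

lemma ind_D_mset_set:
  fixes f :: "nat \<Rightarrow> complex"
  assumes "finite A" "T \<subseteq> A" "f 0 = 0"
  shows "ind_D deg S (mset_set T) * f (d_minus deg (mset_set T))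
    = (\<Sum>P\<in>A \<inter> S. if unique_min deg T P then f (deg P) else 0)"
proof -
  have fin: "finite T"
    using assms finite_subset by blast
  show ?thesis
  proof (cases "\<exists>P. unique_min deg T P")
    case True
    then obtain P where P: "unique_min deg T P" ..
    then have "P \<in> T"
      by (simp add: unique_min_def)
    then have "T \<noteq> {}"
      by blast
    have "in_D deg S (mset_set T) \<longleftrightarrow> P \<in> S"
      using True \<open>T \<noteq> {}\<close> fin
      by (simp add: in_D_def distinguishable_mset_set_iff P_min_mset_set[OF fin P]
          mset_set_empty_iff)
    then have "ind_D deg S (mset_set T) * f (d_minus deg (mset_set T))
        = (if P \<in> S then f (deg P) else 0)"
      by (simp add: ind_D_def d_minus_mset_set[OF fin P])
    also have "\<dots> = (\<Sum>Q\<in>A \<inter> S. if Q = P then f (deg Q) else 0)"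
      using \<open>finite A\<close> \<open>P \<in> T\<close> \<open>T \<subseteq> A\<close> by auto
    also have "\<dots> = (\<Sum>Q\<in>A \<inter> S. if unique_min deg T Q then f (deg Q) else 0)"
      using unique_min_unique[OF P] P by (metis (full_types))
    finally show ?thesis .
  next
    case False
    then have "\<not> distinguishable deg (mset_set T)"
      by (simp add: distinguishable_mset_set_iff[OF fin])
    then have "ind_D deg S (mset_set T) * f (d_minus deg (mset_set T)) = 0"
      using \<open>f 0 = 0\<close> by (cases "T = {}") (simp_all add: ind_D_def in_D_def d_minus_def)
    with False show ?thesis
      by simp
  qed
qed

lemma sum_Pow_unique_min:
  assumes "finite A" "P \<in> A"
  shows "(\<Sum>T\<in>Pow A. if unique_min deg T P then (-1::'a::comm_ring_1) ^ card T else 0)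
    = (if \<forall>Q\<in>A. deg Q \<le> deg P then -1 else 0)"
proof -
  define B where "B = {Q\<in>A. deg P < deg Q}"
  have "finite B" "P \<notin> B"
    using assms by (simp_all add: B_def)
  have "{T\<in>Pow A. unique_min deg T P} = insert P ` Pow B"
  proof (intro equalityI subsetI)
    fix T assume "T \<in> {T\<in>Pow A. unique_min deg T P}"
    then have "T = insert P (T - {P})" "T - {P} \<in> Pow B"
      by (auto simp: unique_min_def B_def)
    then show "T \<in> insert P ` Pow B" by blast
  qed (use assms in \<open>auto simp: unique_min_def B_def\<close>)
  then have "(\<Sum>T\<in>Pow A. if unique_min deg T P then (-1::'a) ^ card T else 0)
      = (\<Sum>T\<in>insert P ` Pow B. (-1) ^ card T)"
    using assms by (simp add: sum.inter_filter[symmetric])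
  also have "\<dots> = (\<Sum>U\<in>Pow B. (-1) ^ card (insert P U))"
    using \<open>P \<notin> B\<close> by (intro sum.reindex_cong[where l = "insert P"]) (auto intro!: inj_onI)
  also have "\<dots> = - (\<Sum>U\<in>Pow B. (-1) ^ card U)"
  proof -
    have "card (insert P U) = Suc (card U)" if "U \<subseteq> B" for U
      using that \<open>finite B\<close> \<open>P \<notin> B\<close> by (meson card_insert_disjoint finite_subset subsetD)
    then show ?thesis
      by (simp add: sum_negf[symmetric])
  qed
  also have "\<dots> = (if \<forall>Q\<in>A. deg Q \<le> deg P then -1 else 0)"
    using \<open>finite B\<close> by (auto simp: sum_Pow_neg_one_power B_def not_less)
  finally show ?thesis .
qed

lemma d_plus_eq_iff:
  assumes "P \<in># g"
  shows "deg P = d_plus deg g \<longleftrightarrow> (\<forall>Q\<in>#g. deg Q \<le> deg P)"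
proof -
  have "Max (deg ` set_mset g) = deg P \<longleftrightarrow> (\<forall>Q\<in>#g. deg Q \<le> deg P)"
    using assms by (subst Max_eq_iff) auto
  with assms show ?thesis
    by (auto simp: d_plus_def)
qed

theorem lemma2p2:
  fixes deg :: "'p::countable \<Rightarrow> nat" and S :: "'p set" and f :: "nat \<Rightarrow> complex"
    and g :: "'p multiset"
  assumes deg_pos: "\<And>P. deg P > 0"
    and fin_deg: "\<And>n. finite {P. deg P = n}"
    and f0: "f 0 = 0"
  shows "(\<Sum>h\<in>{h. h \<subseteq># g}. of_int (moebius h) * ind_D deg S h * f (d_minus deg h))
         = - of_nat (Q_S deg S g) * f (d_plus deg g)"
proof -
  define A where "A = set_mset g"
  have "finite A"
    by (simp add: A_def)
  have "(\<Sum>h\<in>{h. h \<subseteq># g}. of_int (moebius h) * ind_D deg S h * f (d_minus deg h))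
      = (\<Sum>T\<in>Pow A. (-1) ^ card T * (ind_D deg S (mset_set T) * f (d_minus deg (mset_set T))))"
    unfolding A_def
    by (subst sum_subseteq_mset_eq_sum_Pow)
      (auto simp: moebius_eq_0_if_not_mset_set moebius_mset_set finite_subset intro!: sum.cong)
  also have "\<dots> = (\<Sum>T\<in>Pow A. \<Sum>P\<in>A \<inter> S.
      if unique_min deg T P then (-1) ^ card T * f (deg P) else 0)"
    using \<open>finite A\<close> f0
    by (intro sum.cong) (auto simp: ind_D_mset_set sum_distrib_left if_distrib cong: if_cong)
  also have "\<dots> = (\<Sum>P\<in>A \<inter> S.
      f (deg P) * (\<Sum>T\<in>Pow A. if unique_min deg T P then (-1) ^ card T else 0))"
    by (subst sum.swap) (simp add: sum_distrib_left if_distrib mult.commute cong: if_cong)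
  also have "\<dots> = (\<Sum>P\<in>A \<inter> S. if deg P = d_plus deg g then - f (d_plus deg g) else 0)"
    using \<open>finite A\<close>
    by (intro sum.cong) (auto simp: sum_Pow_unique_min A_def d_plus_eq_iff[symmetric])
  also have "\<dots> = (\<Sum>P\<in>{P \<in> S. P \<in># g \<and> deg P = d_plus deg g}. - f (d_plus deg g))"
    using \<open>finite A\<close> by (simp add: sum.inter_filter[symmetric] A_def Int_def conj_ac)
  also have "\<dots> = - of_nat (Q_S deg S g) * f (d_plus deg g)"
    by (simp add: Q_S_def)
  finally show ?thesis .
qed

end
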